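(* In the setting described in the context, suppose $T$ is sufficiently large. Then for any $2\le t\le T$ and any pair $(x_t,x_{t-1})\in\mathbb{R}^d\times\mathbb{R}^d$, \[ \Big|\log\frac{p_{X_{t-1}|X_t}(x_{t-1}\mid x_t)}{p_{Y_{t-1}^\star|Y_t}(x_{t-1}\mid x_t)}\Big|\le T^{c_0+2c_R}\big(\|\sqrt{\alpha_t}x_{t-1}-x_t\|_2+\|x_t\|_2+1\big). \]
   Context: Let $d\ge1$, $T\ge2$. Learning rates: $\beta_1=T^{-c_0}$, $\beta_{t+1}=\frac{c_1\log T}{T}\min\{\beta_1(1+\frac{c_1\log T}{T})^t,1\}$ ($t=1,\dots,T-1$), with $c_0,c_1>0$ sufficiently large universal constants; $\alpha_t=1-\beta_t$, $\bar\alpha_t=\prod_{i\le t}\alpha_i$. Forward process: $X_0\sim p_{\mathsf{data}}$ on $\mathbb{R}^d$ whose support $\mathcal X$ satisfies $\sup_{x\in\mathcal X}\|x\|_2\le R:=T^{c_R}$ for a universal constant $c_R>0$; $X_t=\sqrt{\alpha_t}X_{t-1}+\sqrt{1-\alpha_t}W_t$, $W_t$ i.i.d. $\mathcal N(0,I_d)$ independent of $X_0$. $q_t$ is the density of $X_t$, $s_t^\star=\nabla\log q_t$, $p_{X_{t-1}|X_t}$ the conditional density of $X_{t-1}$ given $X_t$. $\eta_t^\star=1-\alpha_t$, $\sigma_t^{\star2}=\frac{(1-\alpha_t)(\alpha_t-\bar\alpha_t)}{1-\bar\alpha_t}$, and $p_{Y_{t-1}^\star|Y_t}(x_{t-1}\mid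 x_t)=(\frac{\alpha_t}{2\pi\sigma_t^{\star2}})^{d/2}\exp(-\frac{\|\sqrt{\alpha_t}x_{t-1}-x_t-\eta_t^\star s_t^\star(x_t)\|_2^2}{2\sigma_t^{\star2}})$. *)

theory Defs
  imports "HOL-Probability.Probability"
begin

text \<open>Points of R^d are represented as functions nat => real; only the
coordinates i < d are relevant.\<close>

definition vnorm :: "nat \<Rightarrow> (nat \<Rightarrow> real) \<Rightarrow> real" where
  "vnorm d x = sqrt (\<Sum>i<d. (x i)\<^sup>2)"

definition beta :: "real \<Rightarrow> real \<Rightarrow> nat \<Rightarrow> nat \<Rightarrow> real" where
  "beta c0 c1 T t =
     (if t \<le> 1 then real T powr (- c0)
      else (c1 * ln (real T) / real T) *
           min (real T powr (- c0) * (1 + c1 * ln (real T) / real T) ^ (t - 1)) 1)"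

definition alpha :: "real \<Rightarrow> real \<Rightarrow> nat \<Rightarrow> nat \<Rightarrow> real" where
  "alpha c0 c1 T t = 1 - beta c0 c1 T t"

definition alpha_bar :: "real \<Rightarrow> real \<Rightarrow> nat \<Rightarrow> nat \<Rightarrow> real" where
  "alpha_bar c0 c1 T t = (\<Prod>i\<in>{1..t}. alpha c0 c1 T i)"

definition gauss :: "nat \<Rightarrow> real \<Rightarrow> (nat \<Rightarrow> real) \<Rightarrow> real" where
  "gauss d v z = (2 * pi * v) powr (- real d / 2) * exp (- (vnorm d z)\<^sup>2 / (2 * v))"

text \<open>Density q_t of X_t = sqrt(abar_t) X_0 + sqrt(1 - abar_t) Z, X_0 ~ mu.\<close>
definition q :: "nat \<Rightarrow> (nat \<Rightarrow> real) measure \<Rightarrow> real \<Rightarrow> real \<Rightarrow> nat \<Rightarrow> nat \<Rightarrow> (nat \<Rightarrow> real) \<Rightarrow> real" where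
  "q d \<mu> c0 c1 T t x =
     (\<integral>y. gauss d (1 - alpha_bar c0 c1 T t) (\<lambda>i. x i - sqrt (alpha_bar c0 c1 T t) * y i) \<partial>\<mu>)"

definition score :: "nat \<Rightarrow> (nat \<Rightarrow> real) measure \<Rightarrow> real \<Rightarrow> real \<Rightarrow> nat \<Rightarrow> nat \<Rightarrow> (nat \<Rightarrow> real) \<Rightarrow> (nat \<Rightarrow> real)" where
  "score d \<mu> c0 c1 T t x =
     (\<lambda>i. if i < d then deriv (\<lambda>h. ln (q d \<mu> c0 c1 T t (x(i := x i + h)))) 0 else 0)"

text \<open>Conditional density of X_{t-1} given X_t (Bayes formula).\<close>
definition p_cond :: "nat \<Rightarrow> (nat \<Rightarrow> real) measure \<Rightarrow> real \<Rightarrow> real \<Rightarrow> nat \<Rightarrow> nat \<Rightarrow> (nat \<Rightarrow> real) \<Rightarrow> (nat \<Rightarrow> real) \<Rightarrow> real" where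
  "p_cond d \<mu> c0 c1 T t xp x =
     q d \<mu> c0 c1 T (t - 1) xp
     * gauss d (1 - alpha c0 c1 T t) (\<lambda>i. x i - sqrt (alpha c0 c1 T t) * xp i)
     / q d \<mu> c0 c1 T t x"

definition sigma_sq :: "real \<Rightarrow> real \<Rightarrow> nat \<Rightarrow> nat \<Rightarrow> real" where
  "sigma_sq c0 c1 T t =
     (1 - alpha c0 c1 T t) * (alpha c0 c1 T t - alpha_bar c0 c1 T t) / (1 - alpha_bar c0 c1 T t)"

text \<open>p_{Y*_{t-1}|Y_t}(xp | x), with eta*_t = 1 - alpha_t.\<close>
definition p_star :: "nat \<Rightarrow> (nat \<Rightarrow> real) measure \<Rightarrow> real \<Rightarrow> real \<Rightarrow> nat \<Rightarrow> nat \<Rightarrow> (nat \<Rightarrow> real) \<Rightarrow> (nat \<Rightarrow> real) \<Rightarrow> real" where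
  "p_star d \<mu> c0 c1 T t xp x =
     (alpha c0 c1 T t / (2 * pi * sigma_sq c0 c1 T t)) powr (real d / 2)
     * exp (- (vnorm d (\<lambda>i. sqrt (alpha c0 c1 T t) * xp i - x i
                  - (1 - alpha c0 c1 T t) * score d \<mu> c0 c1 T t x i))\<^sup>2
            / (2 * sigma_sq c0 c1 T t))"

end

theory Submission
  imports Defs
begin

(* Write x = x_t and p = x_{t-1}. Completing the square writes the numerator
   q_{t-1}(p) N(x; sqrt(alpha_t) p, 1 - alpha_t) of p_cond as an average, over the posterior of
   X_0 given X_t = x, of Gaussians in p centred at a "bridge mean" m(x, y) that is affine in y.
   By Tweedie's formula the score is a linear function of the posterior mean ybar of X_0, and
   this identifies p_star with the single Gaussian centred at m(x, ybar). Since the data lie in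
   the ball of radius R = T^cR, every centre m(x, y) is within
   2 R sqrt(alpha_bar_{t-1}) (1 - alpha_t) / (1 - alpha_bar_t) of m(x, ybar), so every Gaussian
   ratio, hence also their average, has a logarithm bounded linearly in |p - m(x, ybar)|, which
   in turn is controlled by |sqrt(alpha_t) p - x| + |x| + R. The schedule guarantees
   1 - alpha_t <= (1 - alpha_bar_{t-1}) / 5 and 1 / (1 - alpha_bar_{t-1}) <= T^c0. *)

lemma vnorm_eq_L2_set: "vnorm d x = L2_set x {..<d}"
  by (simp add: vnorm_def L2_set_def)

lemma vnorm_power2: "(vnorm d x)\<^sup>2 = (\<Sum>i<d. (x i)\<^sup>2)"
  by (simp add: vnorm_def sum_nonneg)

lemma vnorm_nonneg: "0 \<le> vnorm d x"
  by (simp add: vnorm_def sum_nonneg)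

lemma vnorm_cong: "(\<And>i. i < d \<Longrightarrow> x i = y i) \<Longrightarrow> vnorm d x = vnorm d y"
  unfolding vnorm_def by (intro arg_cong[where f = sqrt] sum.cong) auto

lemma vnorm_add_le: "vnorm d (\<lambda>i. x i + y i) \<le> vnorm d x + vnorm d y"
  unfolding vnorm_eq_L2_set by (rule L2_set_triangle_ineq)

lemma vnorm_scale: "vnorm d (\<lambda>i. c * x i) = \<bar>c\<bar> * vnorm d x"
  unfolding vnorm_def by (simp add: power_mult_distrib sum_distrib_left[symmetric] real_sqrt_mult)

lemma vnorm_diff_le: "vnorm d (\<lambda>i. x i - y i) \<le> vnorm d x + vnorm d y"
  using vnorm_add_le[of d x "\<lambda>i. - y i"] vnorm_scale[of d "-1" y] by simp

lemma abs_coord_le_vnorm: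
  assumes "i < d" shows "\<bar>x i\<bar> \<le> vnorm d x"
proof -
  have "(x i)\<^sup>2 \<le> (\<Sum>j<d. (x j)\<^sup>2)" by (rule member_le_sum) (use assms in auto)
  then show ?thesis unfolding vnorm_def by (metis real_sqrt_abs real_sqrt_le_mono)
qed

lemma sum_mult_le_vnorm: "(\<Sum>i<d. x i * y i) \<le> vnorm d x * vnorm d y"
proof -
  have "(\<Sum>i<d. x i * y i) \<le> (\<Sum>i<d. \<bar>x i\<bar> * \<bar>y i\<bar>)"
    by (intro sum_mono) (metis abs_ge_self abs_mult)
  also have "\<dots> \<le> vnorm d x * vnorm d y"
    unfolding vnorm_eq_L2_set by (rule L2_set_mult_ineq)
  finally show ?thesis .
qed

section \<open>The one-dimensional Gaussian kernel\<close>

definition gauss_kernel :: "real \<Rightarrow> real \<Rightarrow> real" where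
  "gauss_kernel v s = exp (- s\<^sup>2 / (2 * v))"

lemma has_real_derivative_gauss_kernel:
  "0 < v \<Longrightarrow> (gauss_kernel v has_real_derivative - s / v * gauss_kernel v s) (at s)"
  unfolding gauss_kernel_def
  by (auto intro!: derivative_eq_intros simp: field_simps power2_eq_square)

lemma has_real_derivative_gauss_kernel_deriv:
  "0 < v \<Longrightarrow> ((\<lambda>s. - s / v * gauss_kernel v s) has_real_derivative
                 (s\<^sup>2 / v\<^sup>2 - 1 / v) * gauss_kernel v s) (at s)"
  by (auto intro!: derivative_eq_intros has_real_derivative_gauss_kernel
           simp: field_simps power2_eq_square)

lemma mult_exp_neg_le_1: "0 \<le> (u::real) \<Longrightarrow> u * exp (- u) \<le> 1"
proof -
  assume "0 \<le> u"
  have "u \<le> exp u" using exp_ge_add_one_self[of u] by linarith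
  then show ?thesis by (simp add: exp_minus field_simps)
qed

lemma abs_gauss_kernel_deriv_le:
  assumes "0 < v" shows "\<bar>- s / v * gauss_kernel v s\<bar> \<le> (1 + 2 * v) / v"
proof -
  define u where "u = s\<^sup>2 / (2 * v)"
  have u: "0 \<le> u" "u * exp (- u) \<le> 1" "exp (- u) \<le> 1"
    using assms mult_exp_neg_le_1[of u] by (auto simp: u_def)
  have "\<bar>s\<bar> \<le> 1 + s\<^sup>2"
  proof (cases "\<bar>s\<bar> \<le> 1")
    case False
    then have "\<bar>s\<bar> * 1 \<le> \<bar>s\<bar> * \<bar>s\<bar>" by (intro mult_left_mono) auto
    then show ?thesis by (simp add: power2_eq_square)
  qed (use zero_le_power2[of s] in linarith)
  then have "\<bar>s\<bar> * exp (- u) \<le> (1 + 2 * v * u) * exp (- u)"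
    using assms by (intro mult_right_mono) (auto simp: u_def)
  also have "\<dots> = exp (- u) + 2 * v * (u * exp (- u))" by (simp add: algebra_simps)
  also have "\<dots> \<le> 1 + 2 * v * 1" using u assms by (intro add_mono mult_left_mono) auto
  finally show ?thesis
    using assms by (simp add: gauss_kernel_def u_def abs_mult field_simps)
qed

lemma abs_gauss_kernel_deriv2_le:
  assumes "0 < v" shows "\<bar>(s\<^sup>2 / v\<^sup>2 - 1 / v) * gauss_kernel v s\<bar> \<le> 3 / v"
proof -
  define u where "u = s\<^sup>2 / (2 * v)"
  have u: "0 \<le> u * exp (- u)" "u * exp (- u) \<le> 1" "0 < exp (- u)" "exp (- u) \<le> 1"
    using assms mult_exp_neg_le_1[of u] by (auto simp: u_def)
  have "(s\<^sup>2 / v\<^sup>2 - 1 / v) * gauss_kernel v s = (2 * (u * exp (- u)) - exp (- u)) / v"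
    using assms by (simp add: gauss_kernel_def u_def field_simps power2_eq_square)
  also have "\<bar>\<dots>\<bar> \<le> (2 * 1 + 1) / v"
    unfolding abs_divide abs_of_pos[OF assms]
    by (intro divide_right_mono) (use assms u in \<open>auto simp only: abs_le_iff\<close>)
  finally show ?thesis by simp
qed

lemma gauss_kernel_taylor:
  assumes v: "0 < v"
  shows "\<bar>gauss_kernel v (s + h) - gauss_kernel v s - h * (- s / v * gauss_kernel v s)\<bar> \<le> 3 / v * h\<^sup>2"
proof -
  define g' where "g' s = - s / v * gauss_kernel v s" for s
  have "(g' has_real_derivative (s\<^sup>2 / v\<^sup>2 - 1 / v) * gauss_kernel v s) (at s within S)" for s S
    unfolding g'_def using has_real_derivative_gauss_kernel_deriv[OF v]
    by (rule has_field_derivative_at_within)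
  then have lip: "\<bar>g' a - g' b\<bar> \<le> 3 / v * \<bar>a - b\<bar>" for a b
    using field_differentiable_bound[of UNIV g' "\<lambda>s. (s\<^sup>2 / v\<^sup>2 - 1 / v) * gauss_kernel v s" "3 / v" a b]
      abs_gauss_kernel_deriv2_le[OF v]
    by auto
  define g where "g r = gauss_kernel v (s + r) - r * g' s" for r
  have "(g has_real_derivative (g' (s + r) - g' s)) (at r within S)" for r S
    unfolding g_def g'_def using v
    by (auto intro!: derivative_eq_intros DERIV_chain2[OF has_real_derivative_gauss_kernel[OF v]]
             simp: has_field_derivative_at_within)
  moreover have "\<bar>g' (s + r) - g' s\<bar> \<le> 3 / v * \<bar>h\<bar>" if "r \<in> cball 0 \<bar>h\<bar>" for r
  proof -
    have "\<bar>g' (s + r) - g' s\<bar> \<le> 3 / v * \<bar>r\<bar>" using lip[of "s + r" s] by simp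
    also have "\<dots> \<le> 3 / v * \<bar>h\<bar>" using that v by (intro mult_left_mono) auto
    finally show ?thesis .
  qed
  ultimately have "norm (g h - g 0) \<le> 3 / v * \<bar>h\<bar> * norm (h - 0)"
    by (intro field_differentiable_bound[of "cball 0 \<bar>h\<bar>" g]) (use v in auto)
  then show ?thesis by (simp add: g_def g'_def power2_eq_square mult.assoc)
qed

section \<open>Gaussian mixtures and Tweedie's formula\<close>

lemma gauss_pos: "0 < v \<Longrightarrow> 0 < gauss d v z"
  by (simp add: gauss_def)

lemma gauss_le: "0 < v \<Longrightarrow> gauss d v z \<le> (2 * pi * v) powr (- real d / 2)"
  by (simp add: gauss_def)

lemma gauss_split_coord:
  assumes "i < d"
  shows "gauss d v z = (2 * pi * v) powr (- real d / 2)
           * exp (- (\<Sum>j\<in>{..<d} - {i}. (z j)\<^sup>2) / (2 * v)) * gauss_kernel v (z i)"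
proof -
  have "(vnorm d z)\<^sup>2 = (z i)\<^sup>2 + (\<Sum>j\<in>{..<d} - {i}. (z j)\<^sup>2)"
    unfolding vnorm_power2 using assms by (subst sum.remove[of _ i]) auto
  then show ?thesis
    by (simp add: gauss_def gauss_kernel_def diff_divide_distrib mult.assoc flip: exp_add)
qed

lemma abs_gauss_mult_coord_le:
  assumes "0 < v" "i < d"
  shows "\<bar>gauss d v z * (- z i / v)\<bar> \<le> (2 * pi * v) powr (- real d / 2) * ((1 + 2 * v) / v)"
proof -
  define K where "K = (2 * pi * v) powr (- real d / 2) * exp (- (\<Sum>j\<in>{..<d} - {i}. (z j)\<^sup>2) / (2 * v))"
  have K: "0 \<le> K" "K \<le> (2 * pi * v) powr (- real d / 2)"
    using assms by (auto simp: K_def sum_nonneg mult_left_le)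
  have "gauss d v z * (- z i / v) = K * (- z i / v * gauss_kernel v (z i))"
    unfolding gauss_split_coord[OF assms(2)] K_def by (simp add: ac_simps)
  also have "\<bar>\<dots>\<bar> \<le> (2 * pi * v) powr (- real d / 2) * ((1 + 2 * v) / v)"
    unfolding abs_mult[of K] using K abs_gauss_kernel_deriv_le[OF assms(1), of "z i"]
    by (intro mult_mono) auto
  finally show ?thesis .
qed

lemma gauss_update_coord_taylor:
  assumes "0 < v" "i < d"
  shows "\<bar>gauss d v (z(i := z i + h)) - gauss d v z - h * (gauss d v z * (- z i / v))\<bar>
           \<le> (2 * pi * v) powr (- real d / 2) * (3 / v * h\<^sup>2)"
proof -
  define K where "K = (2 * pi * v) powr (- real d / 2) * exp (- (\<Sum>j\<in>{..<d} - {i}. (z j)\<^sup>2) / (2 * v))"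
  have K: "0 \<le> K" "K \<le> (2 * pi * v) powr (- real d / 2)"
    using assms by (auto simp: K_def sum_nonneg mult_left_le)
  have "(\<Sum>j\<in>{..<d} - {i}. ((z(i := z i + h)) j)\<^sup>2) = (\<Sum>j\<in>{..<d} - {i}. (z j)\<^sup>2)"
    by (rule sum.cong) auto
  then have "gauss d v (z(i := z i + h)) - gauss d v z - h * (gauss d v z * (- z i / v))
      = K * (gauss_kernel v (z i + h) - gauss_kernel v (z i) - h * (- z i / v * gauss_kernel v (z i)))"
    unfolding gauss_split_coord[OF assms(2), of v] K_def by (simp add: algebra_simps)
  also have "\<bar>\<dots>\<bar> \<le> (2 * pi * v) powr (- real d / 2) * (3 / v * h\<^sup>2)"
    unfolding abs_mult using K gauss_kernel_taylor[OF assms(1)] by (intro mult_mono) auto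
  finally show ?thesis .
qed

lemma measurable_PiM_sets_eq:
  "f \<in> borel_measurable (PiM {..<d} (\<lambda>_. borel)) \<Longrightarrow> sets \<mu> = sets (PiM {..<d} (\<lambda>_. borel))
    \<Longrightarrow> f \<in> borel_measurable \<mu>"
  using measurable_cong_sets[of \<mu> "PiM {..<d} (\<lambda>_. borel)" borel borel] by blast

lemma borel_measurable_gauss_shift:
  "sets \<mu> = sets (PiM {..<d} (\<lambda>_. borel)) \<Longrightarrow> (\<lambda>y. gauss d v (\<lambda>i. x i - c * y i)) \<in> borel_measurable \<mu>"
  by (rule measurable_PiM_sets_eq) (unfold gauss_def vnorm_def, measurable)

lemma borel_measurable_coord:
  "sets \<mu> = sets (PiM {..<d} (\<lambda>_. borel)) \<Longrightarrow> i < d \<Longrightarrow> (\<lambda>y. y i) \<in> borel_measurable \<mu>"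
  by (rule measurable_PiM_sets_eq) auto

lemma integrable_gauss_shift:
  assumes "finite_measure \<mu>" "sets \<mu> = sets (PiM {..<d} (\<lambda>_. borel))" "0 < v"
  shows "integrable \<mu> (\<lambda>y. gauss d v (\<lambda>i. x i - c * y i))"
proof -
  interpret finite_measure \<mu> by fact
  show ?thesis
    by (rule integrable_const_bound[where B = "(2 * pi * v) powr (- real d / 2)"])
       (use borel_measurable_gauss_shift[OF assms(2)] gauss_le[OF assms(3)] gauss_pos[OF assms(3)]
        in \<open>auto simp: less_imp_le\<close>)
qed

definition gauss_mixture :: "nat \<Rightarrow> (nat \<Rightarrow> real) measure \<Rightarrow> real \<Rightarrow> real \<Rightarrow> (nat \<Rightarrow> real) \<Rightarrow> real" where
  "gauss_mixture d \<mu> v c x = (\<integral>y. gauss d v (\<lambda>i. x i - c * y i) \<partial>\<mu>)"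

definition posterior_mean :: "nat \<Rightarrow> (nat \<Rightarrow> real) measure \<Rightarrow> real \<Rightarrow> real \<Rightarrow> (nat \<Rightarrow> real) \<Rightarrow> nat \<Rightarrow> real" where
  "posterior_mean d \<mu> v c x =
     (\<lambda>i. (\<integral>y. gauss d v (\<lambda>j. x j - c * y j) * y i \<partial>\<mu>) / gauss_mixture d \<mu> v c x)"

lemma gauss_mixture_pos:
  assumes "prob_space \<mu>" "sets \<mu> = sets (PiM {..<d} (\<lambda>_. borel))" "0 < v"
  shows "0 < gauss_mixture d \<mu> v c x"
proof -
  interpret prob_space \<mu> by fact
  have "(\<integral>y. 0 \<partial>\<mu>) < gauss_mixture d \<mu> v c x"
    unfolding gauss_mixture_def
    by (intro integral_less_AE_space integrable_gauss_shift assms)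
       (auto simp: gauss_pos[OF assms(3)] finite_measure_axioms emeasure_space_1)
  then show ?thesis by simp
qed

lemma has_real_derivative_of_quadratic_remainder:
  fixes f :: "real \<Rightarrow> real"
  assumes rem: "\<And>h. \<bar>f h - f 0 - h * D\<bar> \<le> C * h\<^sup>2"
  shows "(f has_real_derivative D) (at 0)"
proof -
  have "\<bar>(f h - f 0) / h - D\<bar> \<le> C * \<bar>h\<bar>" if "h \<noteq> 0" for h
  proof -
    have "\<bar>(f h - f 0) / h - D\<bar> = \<bar>f h - f 0 - h * D\<bar> / \<bar>h\<bar>"
      using that by (simp add: field_simps flip: abs_divide)
    also have "\<dots> \<le> C * h\<^sup>2 / \<bar>h\<bar>" by (intro divide_right_mono rem) simp
    also have "\<dots> = C * \<bar>h\<bar>" using that by (simp add: power2_eq_square field_simps)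
    finally show ?thesis .
  qed
  then have "\<forall>\<^sub>F h in at 0. norm ((f h - f 0) / h - D) \<le> C * \<bar>h\<bar>"
    by (auto simp: eventually_at_filter)
  moreover have "((\<lambda>h. C * \<bar>h\<bar>) \<longlongrightarrow> 0) (at 0)"
    by (intro tendsto_eq_intros) auto
  ultimately have "((\<lambda>h. (f h - f 0) / h - D) \<longlongrightarrow> 0) (at 0)"
    by (rule Lim_null_comparison)
  then show ?thesis
    by (simp add: has_field_derivative_iff LIM_zero_iff)
qed

(* Differentiation under the integral sign, justified by the uniform Taylor bound
   gauss_update_coord_taylor. *)
lemma has_real_derivative_gauss_mixture_coord:
  assumes "prob_space \<mu>" and sets: "sets \<mu> = sets (PiM {..<d} (\<lambda>_. borel))"
    and v: "0 < v" and i: "i < d"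
  shows "((\<lambda>h. gauss_mixture d \<mu> v c (x(i := x i + h))) has_real_derivative
           (\<integral>y. gauss d v (\<lambda>j. x j - c * y j) * (- (x i - c * y i) / v) \<partial>\<mu>)) (at 0)"
proof (rule has_real_derivative_of_quadratic_remainder)
  interpret prob_space \<mu> by fact
  define B where "B = (2 * pi * v) powr (- real d / 2)"
  define z where "z y = (\<lambda>j. x j - c * y j)" for y
  define G where "G y = gauss d v (z y) * (- z y i / v)" for y
  have shift: "(\<lambda>j. (x(i := x i + h)) j - c * y j) = (z y)(i := z y i + h)" for h y
    by (auto simp: z_def)
  have int: "integrable \<mu> (\<lambda>y. gauss d v ((z y)(i := z y i + h)))" for h
    using integrable_gauss_shift[OF finite_measure_axioms sets v, of "x(i := x i + h)" c]
    by (simp only: shift)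
  have "integrable \<mu> G"
  proof (rule integrable_const_bound[where B = "B * ((1 + 2 * v) / v)"])
    show "AE y in \<mu>. norm (G y) \<le> B * ((1 + 2 * v) / v)"
      using abs_gauss_mult_coord_le[OF v i] by (simp add: G_def B_def)
    have "i \<in> {..<d}" using i by simp
    then show "G \<in> borel_measurable \<mu>"
      by (intro measurable_PiM_sets_eq[OF _ sets]) (unfold G_def z_def gauss_def vnorm_def, measurable)
  qed
  fix h
  define rem where "rem y = gauss d v ((z y)(i := z y i + h)) - gauss d v (z y) - h * G y" for y
  have "gauss_mixture d \<mu> v c (x(i := x i + h)) - gauss_mixture d \<mu> v c (x(i := x i + 0))
          - h * (\<integral>y. G y \<partial>\<mu>) = (\<integral>y. rem y \<partial>\<mu>)"
    unfolding gauss_mixture_def shift rem_def using int[of h] int[of 0] \<open>integrable \<mu> G\<close> by simp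
  also have "\<bar>\<dots>\<bar> \<le> (\<integral>y. \<bar>rem y\<bar> \<partial>\<mu>)"
    using integral_norm_bound[of \<mu> rem] by simp
  also have "\<dots> \<le> (\<integral>y. B * (3 / v * h\<^sup>2) \<partial>\<mu>)"
    using gauss_update_coord_taylor[OF v i] v by (intro integral_mono') (auto simp: rem_def G_def B_def)
  finally show "\<bar>gauss_mixture d \<mu> v c (x(i := x i + h)) - gauss_mixture d \<mu> v c (x(i := x i + 0))
                  - h * (\<integral>y. gauss d v (\<lambda>j. x j - c * y j) * (- (x i - c * y i) / v) \<partial>\<mu>)\<bar>
                \<le> B * 3 / v * h\<^sup>2"
    by (simp add: G_def z_def prob_space)
qed

lemma deriv_ln_gauss_mixture_coord:
  assumes "prob_space \<mu>" "sets \<mu> = sets (PiM {..<d} (\<lambda>_. borel))" "0 < v" "i < d"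
  shows "deriv (\<lambda>h. ln (gauss_mixture d \<mu> v c (x(i := x i + h)))) 0
           = (\<integral>y. gauss d v (\<lambda>j. x j - c * y j) * (- (x i - c * y i) / v) \<partial>\<mu>) / gauss_mixture d \<mu> v c x"
proof -
  have "0 < gauss_mixture d \<mu> v c (x(i := x i + 0))"
    using gauss_mixture_pos[OF assms(1-3)] by simp
  from DERIV_chain2[OF DERIV_ln[OF this] has_real_derivative_gauss_mixture_coord[OF assms]]
  show ?thesis by (auto dest!: DERIV_imp_deriv simp: field_simps)
qed

lemma integrable_gauss_shift_mult_coord:
  assumes "prob_space \<mu>" and sets: "sets \<mu> = sets (PiM {..<d} (\<lambda>_. borel))"
    and support: "AE y in \<mu>. vnorm d y \<le> R" and v: "0 < v" and i: "i < d"
  shows "integrable \<mu> (\<lambda>y. gauss d v (\<lambda>j. x j - c * y j) * y i)"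
proof -
  interpret prob_space \<mu> by fact
  have "AE y in \<mu>. norm (gauss d v (\<lambda>j. x j - c * y j) * y i) \<le> (2 * pi * v) powr (- real d / 2) * R"
    using support
  proof eventually_elim
    case (elim y)
    then have "\<bar>y i\<bar> \<le> R" using abs_coord_le_vnorm[OF i, of y] by simp
    then show ?case
      unfolding real_norm_def abs_mult
      using gauss_le[OF v] gauss_pos[OF v] by (intro mult_mono) (auto simp: less_imp_le)
  qed
  moreover have "(\<lambda>y. gauss d v (\<lambda>j. x j - c * y j) * y i) \<in> borel_measurable \<mu>"
    using borel_measurable_gauss_shift[OF sets] borel_measurable_coord[OF sets i]
    by (rule borel_measurable_times)
  ultimately show ?thesis by (rule integrable_const_bound)
qed

theorem tweedie_formula:
  assumes "prob_space \<mu>" and sets: "sets \<mu> = sets (PiM {..<d} (\<lambda>_. borel))"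
    and support: "AE y in \<mu>. vnorm d y \<le> R" and v: "0 < v" and i: "i < d"
  shows "deriv (\<lambda>h. ln (gauss_mixture d \<mu> v c (x(i := x i + h)))) 0
           = - (x i - c * posterior_mean d \<mu> v c x i) / v"
proof -
  interpret prob_space \<mu> by fact
  define w where "w y = gauss d v (\<lambda>j. x j - c * y j)" for y
  define Z where "Z = gauss_mixture d \<mu> v c x"
  define S where "S = (\<integral>y. w y * y i \<partial>\<mu>)"
  have "(\<integral>y. w y * (- (x i - c * y i) / v) \<partial>\<mu>) = (\<integral>y. (- x i / v) * w y + (c / v) * (w y * y i) \<partial>\<mu>)"
    using v by (intro Bochner_Integration.integral_cong) (auto simp: field_simps)
  also have "\<dots> = (- x i / v) * Z + (c / v) * S"
    using integrable_gauss_shift[OF finite_measure_axioms sets v]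
      integrable_gauss_shift_mult_coord[OF assms]
    by (simp add: w_def Z_def S_def gauss_mixture_def)
  finally have "deriv (\<lambda>h. ln (gauss_mixture d \<mu> v c (x(i := x i + h)))) 0 = ((- x i / v) * Z + (c / v) * S) / Z"
    unfolding deriv_ln_gauss_mixture_coord[OF prob_space_axioms sets v i] by (simp add: w_def Z_def)
  also have "\<dots> = - (x i - c * (S / Z)) / v"
    using gauss_mixture_pos[OF prob_space_axioms sets v, of c x] v by (simp add: Z_def field_simps)
  finally show ?thesis by (simp add: posterior_mean_def S_def w_def Z_def)
qed

lemma sum_mult_posterior_mean_le:
  assumes "prob_space \<mu>" and sets: "sets \<mu> = sets (PiM {..<d} (\<lambda>_. borel))"
    and support: "AE y in \<mu>. vnorm d y \<le> R" and v: "0 < v"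
  shows "(\<Sum>i<d. u i * posterior_mean d \<mu> v c x i) \<le> vnorm d u * R"
proof -
  interpret prob_space \<mu> by fact
  define w where "w y = gauss d v (\<lambda>j. x j - c * y j)" for y
  define Z where "Z = gauss_mixture d \<mu> v c x"
  have Z: "0 < Z" unfolding Z_def by (rule gauss_mixture_pos[OF prob_space_axioms sets v])
  have int: "integrable \<mu> (\<lambda>y. w y * y i)" if "i < d" for i
    unfolding w_def by (rule integrable_gauss_shift_mult_coord[OF assms that])
  have sum: "(\<lambda>y. w y * (\<Sum>i<d. u i * y i)) = (\<lambda>y. \<Sum>i<d. u i * (w y * y i))"
    by (simp add: sum_distrib_left ac_simps)
  have int_sum: "integrable \<mu> (\<lambda>y. w y * (\<Sum>i<d. u i * y i))"
    unfolding sum by (auto intro!: Bochner_Integration.integrable_sum integrable_mult_right int)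
  have int_w: "integrable \<mu> w"
    unfolding w_def by (rule integrable_gauss_shift[OF finite_measure_axioms sets v])
  have "(\<Sum>i<d. u i * posterior_mean d \<mu> v c x i) = (\<Sum>i<d. u i * (\<integral>y. w y * y i \<partial>\<mu>)) / Z"
    by (simp add: sum_divide_distrib posterior_mean_def w_def Z_def)
  also have "(\<Sum>i<d. u i * (\<integral>y. w y * y i \<partial>\<mu>)) = (\<integral>y. w y * (\<Sum>i<d. u i * y i) \<partial>\<mu>)"
    using int by (simp add: sum Bochner_Integration.integral_sum)
  also have "\<dots> \<le> (\<integral>y. vnorm d u * R * w y \<partial>\<mu>)"
  proof (rule integral_mono_AE)
    show "AE y in \<mu>. w y * (\<Sum>i<d. u i * y i) \<le> vnorm d u * R * w y"
      using support
    proof eventually_elim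
      case (elim y)
      have "(\<Sum>i<d. u i * y i) \<le> vnorm d u * R"
        using sum_mult_le_vnorm[of u y d] elim vnorm_nonneg[of d u]
        by (meson mult_left_mono order_trans)
      then show ?case using gauss_pos[OF v] by (simp add: w_def mult_left_mono mult.commute)
    qed
  qed (simp_all add: int_sum int_w)
  also have "\<dots> = vnorm d u * R * Z" by (simp add: w_def Z_def gauss_mixture_def)
  finally show ?thesis using Z by (simp add: divide_le_eq)
qed

lemma vnorm_posterior_mean_le:
  assumes "prob_space \<mu>" and sets: "sets \<mu> = sets (PiM {..<d} (\<lambda>_. borel))"
    and support: "AE y in \<mu>. vnorm d y \<le> R" and v: "0 < v"
  shows "vnorm d (posterior_mean d \<mu> v c x) \<le> R"
proof -
  interpret prob_space \<mu> by fact
  define m where "m = posterior_mean d \<mu> v c x"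
  have "AE y in \<mu>. 0 \<le> R"
    using support by eventually_elim (use vnorm_nonneg in \<open>fastforce intro: order_trans\<close>)
  then have R: "0 \<le> R" by simp
  have "vnorm d m * vnorm d m = (\<Sum>i<d. m i * m i)"
    using vnorm_power2[of d m] by (simp add: power2_eq_square)
  also have "\<dots> \<le> vnorm d m * R"
    unfolding m_def by (rule sum_mult_posterior_mean_le[OF assms])
  finally have "vnorm d m * vnorm d m \<le> vnorm d m * R" .
  then show ?thesis
    using R vnorm_nonneg[of d m] by (cases "vnorm d m = 0") (auto simp: m_def)
qed

section \<open>Completing the square\<close>

lemma completing_square:
  fixes s t p x y :: real
  assumes "1 - t\<^sup>2 \<noteq> 0" "1 - s\<^sup>2 \<noteq> 0" "1 - s\<^sup>2 * t\<^sup>2 \<noteq> 0"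
  shows "(p - t * y)\<^sup>2 / (1 - t\<^sup>2) + (x - s * p)\<^sup>2 / (1 - s\<^sup>2)
       = (x - s * t * y)\<^sup>2 / (1 - s\<^sup>2 * t\<^sup>2)
         + (p - (s * (1 - t\<^sup>2) * x + t * (1 - s\<^sup>2) * y) / (1 - s\<^sup>2 * t\<^sup>2))\<^sup>2
           / ((1 - s\<^sup>2) * (1 - t\<^sup>2) / (1 - s\<^sup>2 * t\<^sup>2))"
proof -
  define u v w where "u = 1 - t\<^sup>2" and "v = 1 - s\<^sup>2" and "w = 1 - s\<^sup>2 * t\<^sup>2"
  define Q where "Q = w * p - s * u * x - t * v * y"
  have ne: "u \<noteq> 0" "v \<noteq> 0" "w \<noteq> 0" using assms by (simp_all add: u_def v_def w_def)
  have "(p - t * y)\<^sup>2 / u + (x - s * p)\<^sup>2 / v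
      = (v * w * (p - t * y)\<^sup>2 + u * w * (x - s * p)\<^sup>2) / (u * v * w)"
    using ne by (simp add: field_simps)
  also have "v * w * (p - t * y)\<^sup>2 + u * w * (x - s * p)\<^sup>2 = u * v * (x - s * t * y)\<^sup>2 + Q\<^sup>2"
    unfolding Q_def u_def v_def w_def by algebra
  also have "(\<dots>) / (u * v * w) = (x - s * t * y)\<^sup>2 / w + (Q / w)\<^sup>2 / (v * u / w)"
    using ne by (simp add: field_simps power2_eq_square)
  finally have "(p - t * y)\<^sup>2 / u + (x - s * p)\<^sup>2 / v
      = (x - s * t * y)\<^sup>2 / w + (Q / w)\<^sup>2 / (v * u / w)" .
  moreover have "Q / w = p - (s * u * x + t * v * y) / w"
    using ne by (simp add: Q_def field_simps)
  ultimately show ?thesis by (simp only: u_def v_def w_def)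
qed

lemma gauss_mult_gauss:
  fixes s t :: real
  assumes s: "s\<^sup>2 < 1" and t: "t\<^sup>2 < 1"
  shows "gauss d (1 - t\<^sup>2) (\<lambda>i. p i - t * y i) * gauss d (1 - s\<^sup>2) (\<lambda>i. x i - s * p i)
       = gauss d (1 - s\<^sup>2 * t\<^sup>2) (\<lambda>i. x i - s * t * y i)
         * gauss d ((1 - s\<^sup>2) * (1 - t\<^sup>2) / (1 - s\<^sup>2 * t\<^sup>2))
             (\<lambda>i. p i - (s * (1 - t\<^sup>2) * x i + t * (1 - s\<^sup>2) * y i) / (1 - s\<^sup>2 * t\<^sup>2))"
proof -
  define u v w where "u = 1 - t\<^sup>2" and "v = 1 - s\<^sup>2" and "w = 1 - s\<^sup>2 * t\<^sup>2"
  define m where "m i = (s * u * x i + t * v * y i) / w" for i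
  have "s\<^sup>2 * t\<^sup>2 < 1 * 1"
    using s t by (intro mult_strict_mono) auto
  then have pos: "0 < u" "0 < v" "0 < w" "0 < v * u / w"
    using s t by (simp_all add: u_def v_def w_def)
  have "(2 * pi * u) powr (- real d / 2) * (2 * pi * v) powr (- real d / 2)
      = ((2 * pi * u) * (2 * pi * v)) powr (- real d / 2)"
    by (rule powr_mult[symmetric])
  also have "(2 * pi * u) * (2 * pi * v) = (2 * pi * w) * (2 * pi * (v * u / w))"
    using pos by (simp add: field_simps)
  also have "(\<dots>) powr (- real d / 2) = (2 * pi * w) powr (- real d / 2) * (2 * pi * (v * u / w)) powr (- real d / 2)"
    by (rule powr_mult)
  finally have const: "(2 * pi * u) powr (- real d / 2) * (2 * pi * v) powr (- real d / 2)
      = (2 * pi * w) powr (- real d / 2) * (2 * pi * (v * u / w)) powr (- real d / 2)" .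
  define A B C D where "A = (vnorm d (\<lambda>i. p i - t * y i))\<^sup>2" and "B = (vnorm d (\<lambda>i. x i - s * p i))\<^sup>2"
    and "C = (vnorm d (\<lambda>i. x i - s * t * y i))\<^sup>2" and "D = (vnorm d (\<lambda>i. p i - m i))\<^sup>2"
  have "A / u + B / v = C / w + D / (v * u / w)"
    unfolding A_def B_def C_def D_def vnorm_power2 sum_divide_distrib sum.distrib[symmetric] m_def
      u_def v_def w_def
    using pos by (intro sum.cong refl completing_square) (auto simp: u_def v_def w_def)
  moreover have "- A / (2 * u) + - B / (2 * v) = - (A / u + B / v) / 2"
    and "- C / (2 * w) + - D / (2 * (v * u / w)) = - (C / w + D / (v * u / w)) / 2"
    using pos by (simp_all add: field_simps)
  ultimately have "exp (- A / (2 * u)) * exp (- B / (2 * v)) = exp (- C / (2 * w)) * exp (- D / (2 * (v * u / w)))"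
    by (simp only: exp_add[symmetric])
  with const show ?thesis
    unfolding gauss_def u_def[symmetric] v_def[symmetric] w_def[symmetric] m_def[symmetric]
      A_def[symmetric] B_def[symmetric] C_def[symmetric] D_def[symmetric]
    by (simp add: ac_simps)
qed

section \<open>Logarithms of averaged ratios\<close>

lemma abs_ln_le_iff:
  fixes \<rho> M :: real
  assumes "0 < \<rho>" shows "\<bar>ln \<rho>\<bar> \<le> M \<longleftrightarrow> exp (- M) \<le> \<rho> \<and> \<rho> \<le> exp M"
proof -
  have "exp (- M) \<le> \<rho> \<longleftrightarrow> - M \<le> ln \<rho>" "\<rho> \<le> exp M \<longleftrightarrow> ln \<rho> \<le> M"
    using ln_le_cancel_iff[of "exp (- M)" \<rho>] ln_le_cancel_iff[of \<rho> "exp M"] assms by simp_all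
  then show ?thesis by linarith
qed

lemma abs_ln_integral_ratio_le:
  fixes w f :: "'a \<Rightarrow> real"
  assumes int: "integrable \<mu> w" "integrable \<mu> (\<lambda>y. w y * f y)"
    and w: "AE y in \<mu>. 0 \<le> w y" "0 < (\<integral>y. w y \<partial>\<mu>)" and K: "0 < K"
    and f: "AE y in \<mu>. 0 < f y \<and> \<bar>ln (f y / K)\<bar> \<le> M"
  shows "\<bar>ln ((\<integral>y. w y * f y \<partial>\<mu>) / ((\<integral>y. w y \<partial>\<mu>) * K))\<bar> \<le> M"
proof -
  have "AE y in \<mu>. exp (- M) * K * w y \<le> w y * f y \<and> w y * f y \<le> exp M * K * w y"
    using w(1) f
  proof eventually_elim
    case (elim y)
    then have "exp (- M) * K \<le> f y" "f y \<le> exp M * K"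
      using K abs_ln_le_iff[of "f y / K" M] by (auto simp: field_simps)
    then show ?case
      using elim mult_right_mono[of "exp (- M) * K" "f y" "w y"] mult_right_mono[of "f y" "exp M * K" "w y"]
      by (simp add: ac_simps)
  qed
  then have "AE y in \<mu>. exp (- M) * K * w y \<le> w y * f y" "AE y in \<mu>. w y * f y \<le> exp M * K * w y"
    by auto
  then have "(\<integral>y. exp (- M) * K * w y \<partial>\<mu>) \<le> (\<integral>y. w y * f y \<partial>\<mu>)"
      and "(\<integral>y. w y * f y \<partial>\<mu>) \<le> (\<integral>y. exp M * K * w y \<partial>\<mu>)"
    using int by (simp_all only: integral_mono_AE integrable_mult_right)
  then have lower: "exp (- M) * K * (\<integral>y. w y \<partial>\<mu>) \<le> (\<integral>y. w y * f y \<partial>\<mu>)"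
      and upper: "(\<integral>y. w y * f y \<partial>\<mu>) \<le> exp M * K * (\<integral>y. w y \<partial>\<mu>)"
    by simp_all
  moreover have "0 < (\<integral>y. w y * f y \<partial>\<mu>)"
    using w(2) K by (intro less_le_trans[OF _ lower]) simp
  ultimately show ?thesis
    using w(2) K by (subst abs_ln_le_iff) (auto simp: field_simps)
qed

lemma ln_gauss_ratio:
  "0 < V \<Longrightarrow> ln (gauss d V z' / gauss d V z) = ((vnorm d z)\<^sup>2 - (vnorm d z')\<^sup>2) / (2 * V)"
  by (simp add: gauss_def diff_divide_distrib flip: exp_diff)

lemma abs_ln_gauss_shift_ratio_le:
  assumes V: "0 < V" and E: "vnorm d (\<lambda>i. m' i - m i) \<le> E"
  shows "\<bar>ln (gauss d V (\<lambda>i. p i - m' i) / gauss d V (\<lambda>i. p i - m i))\<bar>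
           \<le> E * (2 * vnorm d (\<lambda>i. p i - m i) + E) / (2 * V)"
proof -
  define D D' e where "D = vnorm d (\<lambda>i. p i - m i)" and "D' = vnorm d (\<lambda>i. p i - m' i)"
    and "e = vnorm d (\<lambda>i. m' i - m i)"
  have "D' \<le> D + e"
    using vnorm_add_le[of d "\<lambda>i. p i - m i" "\<lambda>i. m i - m' i"] vnorm_scale[of d "-1" "\<lambda>i. m' i - m i"]
    by (simp add: D_def D'_def e_def)
  moreover have "D \<le> D' + e"
    using vnorm_add_le[of d "\<lambda>i. p i - m' i" "\<lambda>i. m' i - m i"] by (simp add: D_def D'_def e_def)
  moreover have "0 \<le> D" "0 \<le> D'" "e \<le> E" by (simp_all add: D_def D'_def e_def vnorm_nonneg E)
  ultimately have "\<bar>D - D'\<bar> * \<bar>D + D'\<bar> \<le> E * (2 * D + E)"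
    by (intro mult_mono) auto
  then have "\<bar>D\<^sup>2 - D'\<^sup>2\<bar> \<le> E * (2 * D + E)"
    by (simp add: power2_eq_square square_diff_square_factored abs_mult mult.commute)
  then show ?thesis
    using V by (simp add: ln_gauss_ratio D_def D'_def abs_divide divide_right_mono)
qed

section \<open>One reverse step\<close>

lemma quadratic_weight_bound:
  fixes s t \<delta> R A X D :: real
  assumes s: "2 / 3 \<le> s" and t: "0 \<le> t" "t \<le> 1" and R: "3 \<le> R" and \<delta>: "0 \<le> \<delta>" "\<delta> \<le> 1 / 5"
    and nonneg: "0 \<le> A" "0 \<le> X" "0 \<le> D" and D: "s * D \<le> A + \<delta> * (X + R)"
  shows "R * t * (2 * D + 2 * R * (t * \<delta>)) \<le> R\<^sup>2 * (A + X + 1)"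
proof -
  have "2 / 3 * D \<le> s * D" using s nonneg by (intro mult_right_mono) auto
  then have D': "2 * D \<le> 3 * A + 3 * \<delta> * X + 3 * \<delta> * R" using D by (simp add: algebra_simps)
  have "t * \<delta> \<le> \<delta>" "R * t \<le> R"
    using t R \<delta> mult_left_le_one_le[of \<delta> t] mult_left_le[of t R] by (auto simp: mult.commute)
  then have "R * t * (2 * D + 2 * R * (t * \<delta>)) \<le> R * (2 * D + 2 * R * \<delta>)"
    using t R \<delta> nonneg by (intro mult_mono add_left_mono) auto
  also have "\<dots> \<le> R * (3 * A + 3 * \<delta> * X + 5 * \<delta> * R)"
    using D' R by (intro mult_left_mono) (simp_all add: algebra_simps)
  also have "\<dots> = (3 * R) * A + (3 * \<delta> * R) * X + (5 * \<delta>) * R\<^sup>2"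
    by (simp add: algebra_simps power2_eq_square)
  also have "\<dots> \<le> R\<^sup>2 * A + R\<^sup>2 * X + 1 * R\<^sup>2"
  proof -
    have "3 * R \<le> R\<^sup>2" "3 * \<delta> * R \<le> R\<^sup>2"
      using R \<delta> mult_right_mono[of 3 R R] mult_right_mono[of "3 * \<delta>" R R]
      by (auto simp: power2_eq_square)
    then show ?thesis
      using nonneg \<delta> by (intro add_mono mult_right_mono) auto
  qed
  finally show ?thesis by (simp add: algebra_simps)
qed

(* a and r stand for alpha_t and alpha_bar_{t-1}. Given X_t = x and X_0 = y, the variable X_{t-1}
   is Gaussian with mean bridge_mean x y and variance bridge_var; denoiser x is the posterior mean
   of X_0 given X_t = x. *)
locale noising_step =
  fixes d :: nat and \<mu> :: "(nat \<Rightarrow> real) measure" and R a r :: real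
  assumes prob: "prob_space \<mu>"
    and sets_eq: "sets \<mu> = sets (PiM {..<d} (\<lambda>_. borel))"
    and support: "AE y in \<mu>. vnorm d y \<le> R"
    and a: "0 < a" "a < 1" and r: "0 < r" "r < 1"
begin

definition bridge_var :: real where
  "bridge_var = (1 - a) * (1 - r) / (1 - a * r)"

definition bridge_mean :: "(nat \<Rightarrow> real) \<Rightarrow> (nat \<Rightarrow> real) \<Rightarrow> nat \<Rightarrow> real" where
  "bridge_mean x y = (\<lambda>i. (sqrt a * (1 - r) * x i + sqrt r * (1 - a) * y i) / (1 - a * r))"

definition denoiser :: "(nat \<Rightarrow> real) \<Rightarrow> nat \<Rightarrow> real" where
  "denoiser = posterior_mean d \<mu> (1 - a * r) (sqrt (a * r))"

lemma ar_less_1: "a * r < 1"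
  using a r mult_strict_mono[of a 1 r 1] by simp

lemma bridge_var_pos: "0 < bridge_var"
  using a r ar_less_1 by (simp add: bridge_var_def)

lemma vnorm_denoiser_le: "vnorm d (denoiser x) \<le> R"
  unfolding denoiser_def using ar_less_1
  by (intro vnorm_posterior_mean_le[OF prob sets_eq support]) simp

lemma gauss_mult_gauss_bridge:
  "gauss d (1 - r) (\<lambda>i. p i - sqrt r * y i) * gauss d (1 - a) (\<lambda>i. x i - sqrt a * p i)
     = gauss d (1 - a * r) (\<lambda>i. x i - sqrt (a * r) * y i) * gauss d bridge_var (\<lambda>i. p i - bridge_mean x y i)"
  using gauss_mult_gauss[of "sqrt a" "sqrt r" d p y x] a r
  by (simp add: bridge_var_def bridge_mean_def real_sqrt_mult)

lemma bayes_identity: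
  "gauss_mixture d \<mu> (1 - r) (sqrt r) p * gauss d (1 - a) (\<lambda>i. x i - sqrt a * p i)
     = (\<integral>y. gauss d (1 - a * r) (\<lambda>i. x i - sqrt (a * r) * y i)
             * gauss d bridge_var (\<lambda>i. p i - bridge_mean x y i) \<partial>\<mu>)"
  by (simp add: gauss_mixture_def gauss_mult_gauss_bridge flip: integral_mult_left_zero)

lemma deriv_ln_gauss_mixture_eq_denoiser:
  "i < d \<Longrightarrow> deriv (\<lambda>h. ln (gauss_mixture d \<mu> (1 - a * r) (sqrt (a * r)) (x(i := x i + h)))) 0
     = - (x i - sqrt (a * r) * denoiser x i) / (1 - a * r)"
  unfolding denoiser_def using ar_less_1 by (intro tweedie_formula[OF prob sets_eq support]) auto

lemma residual_eq_bridge_mean: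
  "sqrt a * p i - x i - (1 - a) * ((sqrt (a * r) * y i - x i) / (1 - a * r))
     = sqrt a * (p i - bridge_mean x y i)"
proof -
  have sa: "sqrt a * (sqrt a * z) = a * z" for z
    using a by (simp flip: mult.assoc)
  show ?thesis
    using ar_less_1 by (simp add: bridge_mean_def real_sqrt_mult field_simps sa)
qed

lemma reverse_kernel_eq:
  assumes sc: "\<And>i. i < d \<Longrightarrow> sc i = deriv (\<lambda>h. ln (gauss_mixture d \<mu> (1 - a * r) (sqrt (a * r)) (x(i := x i + h)))) 0"
  shows "(a / (2 * pi * ((1 - a) * (a - a * r) / (1 - a * r)))) powr (real d / 2)
           * exp (- (vnorm d (\<lambda>i. sqrt a * p i - x i - (1 - a) * sc i))\<^sup>2
                  / (2 * ((1 - a) * (a - a * r) / (1 - a * r))))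
         = gauss d bridge_var (\<lambda>i. p i - bridge_mean x (denoiser x) i)"
proof -
  define D where "D = vnorm d (\<lambda>i. p i - bridge_mean x (denoiser x) i)"
  have \<sigma>: "(1 - a) * (a - a * r) / (1 - a * r) = a * bridge_var"
    by (simp add: bridge_var_def algebra_simps)
  have "vnorm d (\<lambda>i. sqrt a * p i - x i - (1 - a) * sc i)
      = vnorm d (\<lambda>i. sqrt a * (p i - bridge_mean x (denoiser x) i))"
  proof (rule vnorm_cong)
    fix i assume "i < d"
    then have "sc i = (sqrt (a * r) * denoiser x i - x i) / (1 - a * r)"
      using sc deriv_ln_gauss_mixture_eq_denoiser by simp
    then show "sqrt a * p i - x i - (1 - a) * sc i = sqrt a * (p i - bridge_mean x (denoiser x) i)"
      by (simp only: residual_eq_bridge_mean)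
  qed
  then have "(vnorm d (\<lambda>i. sqrt a * p i - x i - (1 - a) * sc i))\<^sup>2 = a * D\<^sup>2"
    using a by (simp add: vnorm_scale D_def power_mult_distrib)
  moreover have "(a / (2 * pi * (a * bridge_var))) powr (real d / 2) = (2 * pi * bridge_var) powr (- real d / 2)"
    using a bridge_var_pos by (simp add: powr_divide powr_minus_divide mult.assoc)
  ultimately show ?thesis
    using a by (simp add: \<sigma> gauss_def D_def)
qed

lemma vnorm_bridge_mean_diff_le:
  assumes "vnorm d y \<le> R"
  shows "vnorm d (\<lambda>i. bridge_mean x y i - bridge_mean x (denoiser x) i)
           \<le> 2 * R * (sqrt r * (1 - a) / (1 - a * r))"
proof -
  define k where "k = sqrt r * (1 - a) / (1 - a * r)"
  have k: "0 \<le> k" using a r ar_less_1 by (simp add: k_def)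
  have "vnorm d (\<lambda>i. bridge_mean x y i - bridge_mean x (denoiser x) i)
      = vnorm d (\<lambda>i. k * (y i - denoiser x i))"
    by (rule vnorm_cong) (simp add: bridge_mean_def k_def diff_divide_distrib[symmetric] algebra_simps)
  also have "\<dots> \<le> k * (R + R)"
    using vnorm_diff_le[of d y "denoiser x"] assms vnorm_denoiser_le[of x] k
    by (simp add: vnorm_scale mult_left_mono)
  finally show ?thesis by (simp add: k_def ac_simps)
qed

lemma bridge_radius_div_var:
  "2 * R * (sqrt r * (1 - a) / (1 - a * r)) / (2 * bridge_var) = R * sqrt r / (1 - r)"
proof -
  have "2 * R * (t * u / w) / (2 * (u * v / w)) = R * t / v" if "u \<noteq> 0" "w \<noteq> 0" for t u v w :: real
    using that by (simp add: field_simps)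
  then show ?thesis
    using a ar_less_1 by (simp add: bridge_var_def)
qed

lemma abs_ln_posterior_average_le:
  "\<bar>ln ((\<integral>y. gauss d (1 - a * r) (\<lambda>i. x i - sqrt (a * r) * y i)
                  * gauss d bridge_var (\<lambda>i. p i - bridge_mean x y i) \<partial>\<mu>)
          / (gauss_mixture d \<mu> (1 - a * r) (sqrt (a * r)) x
             * gauss d bridge_var (\<lambda>i. p i - bridge_mean x (denoiser x) i)))\<bar>
     \<le> R * sqrt r / (1 - r)
        * (2 * vnorm d (\<lambda>i. p i - bridge_mean x (denoiser x) i) + 2 * R * (sqrt r * (1 - a) / (1 - a * r)))"
proof -
  interpret prob_space \<mu> by (rule prob)
  define w where "w y = gauss d (1 - a * r) (\<lambda>i. x i - sqrt (a * r) * y i)" for y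
  define f where "f y = gauss d bridge_var (\<lambda>i. p i - bridge_mean x y i)" for y
  define D where "D = vnorm d (\<lambda>i. p i - bridge_mean x (denoiser x) i)"
  define E where "E = 2 * R * (sqrt r * (1 - a) / (1 - a * r))"
  have int_w: "integrable \<mu> w"
    unfolding w_def using ar_less_1 by (intro integrable_gauss_shift finite_measure_axioms sets_eq) simp
  have "integrable \<mu> (\<lambda>y. gauss d (1 - r) (\<lambda>i. p i - sqrt r * y i) * gauss d (1 - a) (\<lambda>i. x i - sqrt a * p i))"
    using r by (intro integrable_mult_left integrable_gauss_shift finite_measure_axioms sets_eq) simp
  then have int_wf: "integrable \<mu> (\<lambda>y. w y * f y)"
    by (simp add: w_def f_def gauss_mult_gauss_bridge)
  have ae: "AE y in \<mu>. 0 < f y \<and> \<bar>ln (f y / f (denoiser x))\<bar> \<le> E * (2 * D + E) / (2 * bridge_var)"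
    using support
  proof eventually_elim
    case (elim y)
    show ?case
      using abs_ln_gauss_shift_ratio_le[OF bridge_var_pos vnorm_bridge_mean_diff_le[OF elim]]
        gauss_pos[OF bridge_var_pos]
      by (simp add: f_def D_def E_def)
  qed
  have "\<bar>ln ((\<integral>y. w y * f y \<partial>\<mu>) / ((\<integral>y. w y \<partial>\<mu>) * f (denoiser x)))\<bar> \<le> E * (2 * D + E) / (2 * bridge_var)"
  proof (rule abs_ln_integral_ratio_le[OF int_w int_wf _ _ _ ae])
    show "AE y in \<mu>. 0 \<le> w y"
      using ar_less_1 by (simp add: w_def gauss_pos less_imp_le)
    show "0 < (\<integral>y. w y \<partial>\<mu>)"
      using gauss_mixture_pos[OF prob sets_eq, of "1 - a * r"] ar_less_1 by (simp add: w_def gauss_mixture_def)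
    show "0 < f (denoiser x)"
      by (simp add: f_def gauss_pos[OF bridge_var_pos])
  qed
  also have "E * (2 * D + E) / (2 * bridge_var) = E / (2 * bridge_var) * (2 * D + E)"
    by simp
  also have "E / (2 * bridge_var) = R * sqrt r / (1 - r)"
    unfolding E_def by (rule bridge_radius_div_var)
  finally show ?thesis by (simp add: w_def f_def D_def E_def gauss_mixture_def)
qed

lemma abs_ln_ratio_le_bridge_dist:
  assumes sc: "\<And>i. i < d \<Longrightarrow> sc i = deriv (\<lambda>h. ln (gauss_mixture d \<mu> (1 - a * r) (sqrt (a * r)) (x(i := x i + h)))) 0"
  shows "\<bar>ln (gauss_mixture d \<mu> (1 - r) (sqrt r) p * gauss d (1 - a) (\<lambda>i. x i - sqrt a * p i)
             / gauss_mixture d \<mu> (1 - a * r) (sqrt (a * r)) x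
             / ((a / (2 * pi * ((1 - a) * (a - a * r) / (1 - a * r)))) powr (real d / 2)
                * exp (- (vnorm d (\<lambda>i. sqrt a * p i - x i - (1 - a) * sc i))\<^sup>2
                       / (2 * ((1 - a) * (a - a * r) / (1 - a * r))))))\<bar>
         \<le> R * sqrt r / (1 - r)
            * (2 * vnorm d (\<lambda>i. p i - bridge_mean x (denoiser x) i) + 2 * R * (sqrt r * (1 - a) / (1 - a * r)))"
  using abs_ln_posterior_average_le[of x p] reverse_kernel_eq[OF sc, of p]
  by (simp add: bayes_identity)

lemma sqrt_mult_bridge_dist_le:
  "sqrt a * vnorm d (\<lambda>i. p i - bridge_mean x (denoiser x) i)
     \<le> vnorm d (\<lambda>i. sqrt a * p i - x i) + (1 - a) / (1 - a * r) * (vnorm d x + R)"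
proof -
  define \<delta> where "\<delta> = (1 - a) / (1 - a * r)"
  have \<delta>: "0 \<le> \<delta>" using a ar_less_1 by (simp add: \<delta>_def)
  have ar: "sqrt (a * r) \<le> 1" using ar_less_1 by simp
  have "sqrt a * vnorm d (\<lambda>i. p i - bridge_mean x (denoiser x) i)
      = vnorm d (\<lambda>i. sqrt a * (p i - bridge_mean x (denoiser x) i))"
    using a by (simp add: vnorm_scale)
  also have "\<dots> = vnorm d (\<lambda>i. (sqrt a * p i - x i) + \<delta> * (x i - sqrt (a * r) * denoiser x i))"
  proof (rule vnorm_cong)
    fix i
    have "(1 - a) * ((sqrt (a * r) * denoiser x i - x i) / (1 - a * r))
        = - (\<delta> * (x i - sqrt (a * r) * denoiser x i))"
      using ar_less_1 by (simp add: \<delta>_def field_simps)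
    then show "sqrt a * (p i - bridge_mean x (denoiser x) i)
        = (sqrt a * p i - x i) + \<delta> * (x i - sqrt (a * r) * denoiser x i)"
      using residual_eq_bridge_mean[of p i x "denoiser x"] by linarith
  qed
  also have "\<dots> \<le> vnorm d (\<lambda>i. sqrt a * p i - x i) + \<delta> * (vnorm d x + sqrt (a * r) * vnorm d (denoiser x))"
  proof -
    have "vnorm d (\<lambda>i. \<delta> * (x i - sqrt (a * r) * denoiser x i))
        \<le> \<delta> * (vnorm d x + sqrt (a * r) * vnorm d (denoiser x))"
      using vnorm_diff_le[of d x "\<lambda>i. sqrt (a * r) * denoiser x i"] \<delta> a r
      by (simp add: vnorm_scale mult_left_mono)
    then show ?thesis
      using vnorm_add_le[of d "\<lambda>i. sqrt a * p i - x i" "\<lambda>i. \<delta> * (x i - sqrt (a * r) * denoiser x i)"]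
      by linarith
  qed
  also have "\<dots> \<le> vnorm d (\<lambda>i. sqrt a * p i - x i) + \<delta> * (vnorm d x + R)"
    using mult_right_mono[OF ar vnorm_nonneg[of d "denoiser x"]] vnorm_denoiser_le[of x] \<delta>
    by (intro add_left_mono mult_left_mono) auto
  finally show ?thesis by (simp add: \<delta>_def)
qed

theorem abs_ln_reverse_ratio_le:
  assumes sc: "\<And>i. i < d \<Longrightarrow> sc i = deriv (\<lambda>h. ln (gauss_mixture d \<mu> (1 - a * r) (sqrt (a * r)) (x(i := x i + h)))) 0"
    and a49: "4 / 9 \<le> a" and R3: "3 \<le> R" and step: "(1 - a) / (1 - r) \<le> 1 / 5"
  shows "\<bar>ln (gauss_mixture d \<mu> (1 - r) (sqrt r) p * gauss d (1 - a) (\<lambda>i. x i - sqrt a * p i)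
             / gauss_mixture d \<mu> (1 - a * r) (sqrt (a * r)) x
             / ((a / (2 * pi * ((1 - a) * (a - a * r) / (1 - a * r)))) powr (real d / 2)
                * exp (- (vnorm d (\<lambda>i. sqrt a * p i - x i - (1 - a) * sc i))\<^sup>2
                       / (2 * ((1 - a) * (a - a * r) / (1 - a * r))))))\<bar>
         \<le> R\<^sup>2 / (1 - r) * (vnorm d (\<lambda>i. sqrt a * p i - x i) + vnorm d x + 1)"
proof -
  define D where "D = vnorm d (\<lambda>i. p i - bridge_mean x (denoiser x) i)"
  define \<delta> where "\<delta> = (1 - a) / (1 - a * r)"
  have "1 - r \<le> 1 - a * r" using a r mult_right_mono[of a 1 r] by simp
  then have "\<delta> \<le> 1 / 5"
    unfolding \<delta>_def using a r ar_less_1 by (intro order_trans[OF divide_left_mono step]) auto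
  moreover have "0 \<le> \<delta>" using a ar_less_1 by (simp add: \<delta>_def)
  ultimately have \<delta>: "0 \<le> \<delta>" "\<delta> \<le> 1 / 5" by auto
  have "sqrt (4 / 9) \<le> sqrt a" using a49 by (rule real_sqrt_le_mono)
  then have s: "2 / 3 \<le> sqrt a" by (simp add: real_sqrt_divide)
  have "R * sqrt r * (2 * D + 2 * R * (sqrt r * \<delta>))
      \<le> R\<^sup>2 * (vnorm d (\<lambda>i. sqrt a * p i - x i) + vnorm d x + 1)"
    using sqrt_mult_bridge_dist_le[of p x] r
    by (intro quadratic_weight_bound[OF s _ _ R3 \<delta>]) (auto simp: D_def \<delta>_def vnorm_nonneg)
  then have "R * sqrt r / (1 - r) * (2 * D + 2 * R * (sqrt r * \<delta>))
      \<le> R\<^sup>2 / (1 - r) * (vnorm d (\<lambda>i. sqrt a * p i - x i) + vnorm d x + 1)"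
    using r by (simp add: divide_right_mono)
  with abs_ln_ratio_le_bridge_dist[OF sc, of p] show ?thesis
    by (simp add: D_def \<delta>_def)
qed

end

section \<open>The learning-rate schedule\<close>

lemma alpha_bar_Suc: "alpha_bar c0 c1 T (Suc k) = alpha c0 c1 T (Suc k) * alpha_bar c0 c1 T k"
  unfolding alpha_bar_def by (simp add: prod.nat_ivl_Suc')

lemma q_eq_gauss_mixture:
  "q d \<mu> c0 c1 T t = gauss_mixture d \<mu> (1 - alpha_bar c0 c1 T t) (sqrt (alpha_bar c0 c1 T t))"
  by (simp add: fun_eq_iff q_def gauss_mixture_def)

locale learning_rates =
  fixes c0 c1 :: real and T :: nat
  assumes c0_pos: "0 < c0" and c1_pos: "0 < c1" and T_ge_2: "2 \<le> T"
    and rate_small: "c1 * ln (real T) / real T \<le> 1 / 25"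
begin

definition kappa :: real where
  "kappa = c1 * ln (real T) / real T"

definition growth :: "nat \<Rightarrow> real" where
  "growth k = min (real T powr (- c0) * (1 + kappa) ^ (k - 1)) 1"

lemma kappa_pos: "0 < kappa"
  using c1_pos T_ge_2 by (simp add: kappa_def)

lemma kappa_le: "kappa \<le> 1 / 25"
  using rate_small by (simp add: kappa_def)

lemma beta_1_bounds: "0 < real T powr (- c0)" "real T powr (- c0) < 1"
  using c0_pos T_ge_2 by (auto intro: powr_less_one)

lemma beta_1: "beta c0 c1 T 1 = real T powr (- c0)"
  by (simp add: beta_def)

lemma beta_eq_growth: "2 \<le> k \<Longrightarrow> beta c0 c1 T k = kappa * growth k"
  by (simp add: beta_def kappa_def growth_def)

lemma growth_1: "growth 1 = real T powr (- c0)"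
  using beta_1_bounds by (simp add: growth_def)

lemma growth_pos: "0 < growth k" and growth_le_1: "growth k \<le> 1"
  using beta_1_bounds kappa_pos by (auto simp: growth_def)

lemma growth_Suc:
  assumes "1 \<le> k"
  shows "growth k \<le> growth (Suc k)" "growth (Suc k) \<le> (1 + kappa) * growth k"
proof -
  define g where "g = real T powr (- c0) * (1 + kappa) ^ (k - 1)"
  have g: "0 < g" using beta_1_bounds kappa_pos by (simp add: g_def)
  have gS: "growth (Suc k) = min (g * (1 + kappa)) 1" "growth k = min g 1"
    using assms by (cases k; simp add: growth_def g_def ac_simps)+
  have "g \<le> g * (1 + kappa)" using g kappa_pos by simp
  then show "growth k \<le> growth (Suc k)" "growth (Suc k) \<le> (1 + kappa) * growth k"
    using kappa_pos by (auto simp: gS min_def mult.commute)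
qed

lemma alpha_bounds:
  assumes "1 \<le> k" shows "0 < alpha c0 c1 T k" "alpha c0 c1 T k < 1"
proof -
  have "0 < beta c0 c1 T k \<and> beta c0 c1 T k < 1"
  proof (cases "k = 1")
    case False
    then have "beta c0 c1 T k = kappa * growth k" using assms by (intro beta_eq_growth) simp
    moreover have "kappa * growth k \<le> kappa * 1"
      using growth_le_1 kappa_pos by (intro mult_left_mono) auto
    ultimately show ?thesis
      using mult_pos_pos[OF kappa_pos growth_pos[of k]] kappa_le by linarith
  qed (use beta_1 beta_1_bounds in simp)
  then show "0 < alpha c0 c1 T k" "alpha c0 c1 T k < 1" by (simp_all add: alpha_def)
qed

lemma alpha_bar_pos: "0 < alpha_bar c0 c1 T k"
  unfolding alpha_bar_def using alpha_bounds by (intro prod_pos) auto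

lemma alpha_bar_le: "1 \<le> k \<Longrightarrow> alpha_bar c0 c1 T k \<le> 1 - real T powr (- c0)"
proof (induction k rule: nat_induct_at_least)
  case base
  then show ?case by (simp add: alpha_bar_def alpha_def beta_def)
next
  case (Suc k)
  have "alpha_bar c0 c1 T (Suc k) \<le> 1 * alpha_bar c0 c1 T k"
    unfolding alpha_bar_Suc using alpha_bounds[of "Suc k"] alpha_bar_pos[of k]
    by (intro mult_right_mono) auto
  with Suc.IH show ?case by simp
qed

lemma growth_le_one_minus_alpha_bar: "1 \<le> k \<Longrightarrow> growth k / 4 \<le> 1 - alpha_bar c0 c1 T k"
proof (induction k rule: nat_induct_at_least)
  case base
  have "alpha_bar c0 c1 T 1 = 1 - growth 1"
    using growth_1 by (simp add: alpha_bar_def alpha_def beta_def)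
  then show ?case using growth_pos[of 1] by simp
next
  case (Suc k)
  define u where "u = 1 - alpha_bar c0 c1 T k"
  have \<beta>: "beta c0 c1 T (Suc k) = kappa * growth (Suc k)"
    using Suc.hyps by (intro beta_eq_growth) simp
  have step: "1 - alpha_bar c0 c1 T (Suc k) = u + kappa * growth (Suc k) * (1 - u)"
    by (simp add: alpha_bar_Suc alpha_def \<beta> u_def algebra_simps)
  have u: "u \<le> 1" using alpha_bar_pos[of k] by (simp add: u_def)
  have \<beta>0: "0 \<le> kappa * growth (Suc k)" using kappa_pos growth_pos[of "Suc k"] by simp
  show ?case
  proof (cases "1 / 4 \<le> u")
    case True
    then show ?thesis
      unfolding step using growth_le_1[of "Suc k"] \<beta>0 u by (simp add: add_increasing2)
  next
    case False
    have "growth (Suc k) \<le> growth k + kappa * growth k"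
      using growth_Suc(2)[OF Suc.hyps] by (simp add: algebra_simps)
    moreover have "kappa * growth k \<le> kappa * growth (Suc k)"
      using growth_Suc(1)[OF Suc.hyps] kappa_pos by (intro mult_left_mono) auto
    ultimately have "growth (Suc k) \<le> growth k + kappa * growth (Suc k)" by linarith
    moreover have "kappa * growth (Suc k) \<le> 4 * (kappa * growth (Suc k) * (1 - u))"
      using False \<beta>0 mult_left_mono[of "1 / 4" "1 - u" "kappa * growth (Suc k)"] by simp
    ultimately show ?thesis
      unfolding step using Suc.IH by (simp add: u_def)
  qed
qed


lemma alpha_bar_bounds:
  assumes "1 \<le> k"
  shows "0 < alpha_bar c0 c1 T k" "alpha_bar c0 c1 T k < 1"
    and "1 / (1 - alpha_bar c0 c1 T k) \<le> real T powr c0"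
proof -
  have le: "real T powr (- c0) \<le> 1 - alpha_bar c0 c1 T k"
    using alpha_bar_le[OF assms] by simp
  show "0 < alpha_bar c0 c1 T k" by (rule alpha_bar_pos)
  have lt: "alpha_bar c0 c1 T k < 1" using le beta_1_bounds(1) by linarith
  then show "alpha_bar c0 c1 T k < 1" .
  have "1 / (1 - alpha_bar c0 c1 T k) \<le> 1 / real T powr (- c0)"
    using lt beta_1_bounds(1) by (intro divide_left_mono[OF le]) simp_all
  then show "1 / (1 - alpha_bar c0 c1 T k) \<le> real T powr c0"
    by (simp add: powr_minus_divide)
qed

lemma alpha_ge: "2 \<le> t \<Longrightarrow> 4 / 9 \<le> alpha c0 c1 T t"
  using beta_eq_growth[of t] mult_left_le[OF growth_le_1 less_imp_le[OF kappa_pos], of t] kappa_le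
  unfolding alpha_def by linarith

lemma step_ratio_le:
  assumes "2 \<le> t"
  shows "(1 - alpha c0 c1 T t) / (1 - alpha_bar c0 c1 T (t - 1)) \<le> 1 / 5"
proof -
  define u where "u = 1 - alpha_bar c0 c1 T (t - 1)"
  have t: "1 \<le> t - 1" "Suc (t - 1) = t" using assms by auto
  have u: "0 < u" using alpha_bar_bounds(2)[OF t(1)] by (simp add: u_def)
  have "1 - alpha c0 c1 T t = kappa * growth t"
    using beta_eq_growth[OF assms] by (simp add: alpha_def)
  also have "\<dots> \<le> kappa * ((1 + kappa) * growth (t - 1))"
    using growth_Suc(2)[OF t(1), unfolded t(2)] kappa_pos by (intro mult_left_mono) auto
  also have "\<dots> \<le> kappa * ((1 + kappa) * (4 * u))"
    using growth_le_one_minus_alpha_bar[OF t(1)] kappa_pos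
    by (intro mult_left_mono) (auto simp: u_def)
  also have "\<dots> = (4 * kappa * (1 + kappa)) * u" by (simp add: algebra_simps)
  also have "\<dots> \<le> 1 / 5 * u"
  proof (rule mult_right_mono)
    have "4 * kappa * (1 + kappa) \<le> 4 * (1 / 25) * (1 + 1 / 25)"
      using kappa_pos kappa_le by (intro mult_mono) auto
    then show "4 * kappa * (1 + kappa) \<le> 1 / 5" by simp
  qed (use u in simp)
  finally show ?thesis using u by (simp add: u_def divide_le_eq)
qed

theorem abs_ln_p_cond_div_p_star_le:
  assumes prob: "prob_space \<mu>" and sets_eq: "sets \<mu> = sets (PiM {..<d} (\<lambda>_. borel))"
    and support: "AE y in \<mu>. vnorm d y \<le> R" and R: "3 \<le> R" and t: "2 \<le> t"
  shows "\<bar>ln (p_cond d \<mu> c0 c1 T t xp xt / p_star d \<mu> c0 c1 T t xp xt)\<bar>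
           \<le> real T powr c0 * R\<^sup>2 * (vnorm d (\<lambda>i. sqrt (alpha c0 c1 T t) * xp i - xt i) + vnorm d xt + 1)"
proof -
  define a r where "a = alpha c0 c1 T t" and "r = alpha_bar c0 c1 T (t - 1)"
  have t1: "1 \<le> t - 1" using t by simp
  have ab: "alpha_bar c0 c1 T t = a * r"
    using alpha_bar_Suc[of c0 c1 T "t - 1"] t by (simp add: a_def r_def)
  have "0 < a" "a < 1" using alpha_bounds[of t] t by (simp_all add: a_def)
  moreover have "0 < r" "r < 1" using alpha_bar_bounds[OF t1] by (simp_all add: r_def)
  ultimately have "noising_step d \<mu> R a r"
    using prob sets_eq support by (simp add: noising_step_def)
  then interpret noising_step d \<mu> R a r .
  have "\<bar>ln (p_cond d \<mu> c0 c1 T t xp xt / p_star d \<mu> c0 c1 T t xp xt)\<bar>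
      \<le> R\<^sup>2 / (1 - r) * (vnorm d (\<lambda>i. sqrt a * xp i - xt i) + vnorm d xt + 1)"
  proof -
    have "score d \<mu> c0 c1 T t xt i
        = deriv (\<lambda>h. ln (gauss_mixture d \<mu> (1 - a * r) (sqrt (a * r)) (xt(i := xt i + h)))) 0" if "i < d" for i
      using that by (simp add: score_def q_eq_gauss_mixture ab)
    from abs_ln_reverse_ratio_le[OF this] show ?thesis
      using alpha_ge[OF t] R step_ratio_le[OF t] r_def
      by (simp add: p_cond_def p_star_def sigma_sq_def q_eq_gauss_mixture ab a_def)
  qed
  also have "\<dots> \<le> real T powr c0 * R\<^sup>2 * (vnorm d (\<lambda>i. sqrt a * xp i - xt i) + vnorm d xt + 1)"
  proof (rule mult_right_mono)
    have "R\<^sup>2 * (1 / (1 - r)) \<le> R\<^sup>2 * real T powr c0"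
      using alpha_bar_bounds(3)[OF t1] by (intro mult_left_mono) (auto simp: r_def)
    then show "R\<^sup>2 / (1 - r) \<le> real T powr c0 * R\<^sup>2" by (simp add: mult.commute)
  qed (simp add: vnorm_nonneg add_nonneg_nonneg)
  finally show ?thesis by (simp add: a_def)
qed

end

lemma eventually_learning_rate_conditions:
  assumes "0 < c1" "0 < cR"
  shows "eventually (\<lambda>T. 2 \<le> T \<and> c1 * ln (real T) / real T \<le> 1 / 25 \<and> 3 \<le> real T powr cR) sequentially"
proof (intro eventually_conj)
  show "eventually (\<lambda>T. 2 \<le> T) sequentially" by (rule eventually_ge_at_top)
  have "((\<lambda>T. c1 * (ln (real T) / real T)) \<longlongrightarrow> c1 * 0) sequentially"
    by (intro tendsto_mult tendsto_const lim_ln_over_n)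
  then have "eventually (\<lambda>T. c1 * (ln (real T) / real T) < 1 / 25) sequentially"
    by (rule order_tendstoD(2)) simp
  then show "eventually (\<lambda>T. c1 * ln (real T) / real T \<le> 1 / 25) sequentially"
    by (rule eventually_mono) simp
  have "eventually (\<lambda>T. 3 powr (1 / cR) \<le> real T) sequentially"
    by (rule eventually_sequentiallyI[of "nat \<lceil>3 powr (1 / cR)\<rceil>"]) linarith
  then show "eventually (\<lambda>T. 3 \<le> real T powr cR) sequentially"
  proof (rule eventually_mono)
    fix T assume "3 powr (1 / cR) \<le> real T"
    then have "(3 powr (1 / cR)) powr cR \<le> real T powr cR"
      using assms by (intro powr_mono2) auto
    then show "3 \<le> real T powr cR" using assms by (simp add: powr_powr)
  qed
qed

theorem eventually_abs_ln_p_cond_div_p_star_le: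
  assumes c0: "0 < c0" and c1: "0 < c1" and cR: "0 < cR"
  shows "\<exists>T0::nat. \<forall>T \<ge> T0. \<forall>(d::nat) (\<mu>::(nat \<Rightarrow> real) measure).
     T \<ge> 2 \<longrightarrow> d \<ge> 1 \<longrightarrow> prob_space \<mu> \<longrightarrow>
     sets \<mu> = sets (PiM {..<d} (\<lambda>_. borel)) \<longrightarrow>
     (AE y in \<mu>. vnorm d y \<le> real T powr cR) \<longrightarrow>
     (\<forall>t xt xp. 2 \<le> t \<and> t \<le> T \<longrightarrow>
        \<bar>ln (p_cond d \<mu> c0 c1 T t xp xt / p_star d \<mu> c0 c1 T t xp xt)\<bar>
        \<le> real T powr (c0 + 2 * cR) *
           (vnorm d (\<lambda>i. sqrt (alpha c0 c1 T t) * xp i - xt i) + vnorm d xt + 1))"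
proof -
  obtain T0 where T0: "\<And>T. T0 \<le> T \<Longrightarrow> 2 \<le> T \<and> c1 * ln (real T) / real T \<le> 1 / 25 \<and> 3 \<le> real T powr cR"
    using eventually_learning_rate_conditions[OF c1 cR] by (auto simp: eventually_sequentially)
  show ?thesis
  proof (intro exI[of _ T0] allI impI, elim conjE)
    fix T d t :: nat and xt xp :: "nat \<Rightarrow> real" and \<mu> :: "(nat \<Rightarrow> real) measure"
    assume T: "T0 \<le> T" and \<mu>: "prob_space \<mu>" "sets \<mu> = sets (PiM {..<d} (\<lambda>_. borel))"
      "AE y in \<mu>. vnorm d y \<le> real T powr cR" and t: "2 \<le> t"
    interpret learning_rates c0 c1 T
      using T0[OF T] c0 c1 by unfold_locales auto
    have "real T powr (c0 + 2 * cR) = real T powr c0 * (real T powr cR)\<^sup>2"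
      by (simp add: power2_eq_square flip: powr_add)
    then show "\<bar>ln (p_cond d \<mu> c0 c1 T t xp xt / p_star d \<mu> c0 c1 T t xp xt)\<bar>
        \<le> real T powr (c0 + 2 * cR) * (vnorm d (\<lambda>i. sqrt (alpha c0 c1 T t) * xp i - xt i) + vnorm d xt + 1)"
      using abs_ln_p_cond_div_p_star_le[OF \<mu> _ t, of xp xt] T0[OF T] by simp
  qed
qed

theorem lemma4:
  assumes cR: "cR > 0"
  shows "\<exists>C0 C1. \<forall>c0 \<ge> C0. \<forall>c1 \<ge> C1. \<exists>T0::nat. \<forall>T \<ge> T0. \<forall>(d::nat) (\<mu>::(nat \<Rightarrow> real) measure).
     T \<ge> 2 \<longrightarrow> d \<ge> 1 \<longrightarrow> prob_space \<mu> \<longrightarrow>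
     sets \<mu> = sets (PiM {..<d} (\<lambda>_. borel)) \<longrightarrow>
     (AE y in \<mu>. vnorm d y \<le> real T powr cR) \<longrightarrow>
     (\<forall>t xt xp. 2 \<le> t \<and> t \<le> T \<longrightarrow>
        \<bar>ln (p_cond d \<mu> c0 c1 T t xp xt / p_star d \<mu> c0 c1 T t xp xt)\<bar>
        \<le> real T powr (c0 + 2 * cR) *
           (vnorm d (\<lambda>i. sqrt (alpha c0 c1 T t) * xp i - xt i) + vnorm d xt + 1))"
  by (rule exI[of _ 1], rule exI[of _ 1], intro allI impI, rule eventually_abs_ln_p_cond_div_p_star_le)
     (use cR in auto)

end
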